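(* Let $T$ be a trunk of an order $P$. Any two chains $C,C'\subseteq T$ that are maximal among the chains contained in $T$ are order-isomorphic (in particular they have the same cardinality). Moreover, if $T$ is a full trunk of $P$, then every element of $T$ belongs to a chain contained in $T$ that is order-isomorphic to a maximum chain of $P$.
   Context: Orders are partial orders; $x\sim y$ means $x\ne y$ and $x,y$ incomparable. A trunk of $P$ is a subset $T$ (with the induced order) such that for all pairwise distinct $x,y,z\in T$, $x\sim y$ and $y\sim z$ imply $x\sim z$. A chain of $P$ is maximum if it is maximal under inclusion and no chain of $P$ has greater cardinality (for a well-founded order: greater order type). A full trunk is a trunk containing at least one maximum chain of $P$. *)

theory Defs
  imports Main
begin

text \<open>An order P is represented by a carrier set P of a type of class order
  (with the induced partial order).\<close>

definition incomp :: "'a::order \<Rightarrow> 'a \<Rightarrow> bool" where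
  "incomp x y \<longleftrightarrow> x \<noteq> y \<and> \<not> x \<le> y \<and> \<not> y \<le> x"

definition trunk :: "'a::order set \<Rightarrow> 'a set \<Rightarrow> bool" where
  "trunk P T \<longleftrightarrow> T \<subseteq> P \<and>
     (\<forall>x\<in>T. \<forall>y\<in>T. \<forall>z\<in>T. x \<noteq> y \<and> y \<noteq> z \<and> x \<noteq> z \<and> incomp x y \<and> incomp y z
        \<longrightarrow> incomp x z)"

definition maximal_chain_in :: "'a::order set \<Rightarrow> 'a set \<Rightarrow> bool" where
  "maximal_chain_in S C \<longleftrightarrow> C \<subseteq> S \<and> Complete_Partial_Order.chain (\<le>) C \<and>
     (\<forall>D. D \<subseteq> S \<and> Complete_Partial_Order.chain (\<le>) D \<and> C \<subseteq> D \<longrightarrow> D = C)"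

definition order_iso :: "'a::order set \<Rightarrow> 'b::order set \<Rightarrow> bool" where
  "order_iso A B \<longleftrightarrow> (\<exists>f. bij_betw f A B \<and> (\<forall>x\<in>A. \<forall>y\<in>A. x \<le> y \<longleftrightarrow> f x \<le> f y))"

definition well_founded_order :: "'a::order set \<Rightarrow> bool" where
  "well_founded_order P \<longleftrightarrow>
     (\<forall>S. S \<subseteq> P \<and> S \<noteq> {} \<longrightarrow> (\<exists>m\<in>S. \<forall>s\<in>S. \<not> s < m))"

text \<open>Maximum chain: maximal under inclusion, and no chain is larger:
  for a well-founded order, no chain has greater order type (i.e. every chain
  order-embeds into C; chains are then well-orders); otherwise no chain has
  greater cardinality.\<close>

definition maximum_chain :: "'a::order set \<Rightarrow> 'a set \<Rightarrow> bool" where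
  "maximum_chain P C \<longleftrightarrow> maximal_chain_in P C \<and>
     (\<forall>D. D \<subseteq> P \<and> Complete_Partial_Order.chain (\<le>) D \<longrightarrow>
        (if well_founded_order P
         then (\<exists>f. f ` D \<subseteq> C \<and> (\<forall>x\<in>D. \<forall>y\<in>D. x < y \<longrightarrow> f x < f y))
         else (\<exists>f. inj_on f D \<and> f ` D \<subseteq> C)))"

definition full_trunk :: "'a::order set \<Rightarrow> 'a set \<Rightarrow> bool" where
  "full_trunk P T \<longleftrightarrow> trunk P T \<and> (\<exists>C. maximum_chain P C \<and> C \<subseteq> T)"

end

theory Submission
  imports Defs
begin

text \<open>On a trunk, "equal or incomparable" is an equivalence relation, and every
  class is an antichain. A chain that is maximal in the trunk therefore meets
  every class exactly once, and distinct classes are linearly ordered by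
  comparing any of their representatives. Mapping each element of one maximal
  chain to the element of another maximal chain in the same class is thus an
  order isomorphism. For the second claim, exchange in a maximum chain
  \<open>M \<subseteq> T\<close> the representative of the class of \<open>x\<close> for \<open>x\<close>; the result is again
  maximal in \<open>T\<close>, hence isomorphic to \<open>M\<close>.\<close>

definition incomp_eq :: "'a::order \<Rightarrow> 'a \<Rightarrow> bool" where
  "incomp_eq x y \<longleftrightarrow> x = y \<or> incomp x y"

lemma incomp_eq_refl: "incomp_eq x x"
  by (simp add: incomp_eq_def)

lemma incomp_eq_sym: "incomp_eq x y \<Longrightarrow> incomp_eq y x"
  by (auto simp: incomp_eq_def incomp_def)

lemma incomp_eq_trans:
  assumes "trunk P T" "x \<in> T" "y \<in> T" "z \<in> T" "incomp_eq x y" "incomp_eq y z"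
  shows "incomp_eq x z"
proof (cases "x = y \<or> y = z \<or> x = z")
  case True
  then show ?thesis using assms(5,6) by (auto simp: incomp_eq_def)
next
  case False
  then have "incomp x y" "incomp y z"
    using assms(5,6) by (auto simp: incomp_eq_def)
  then show ?thesis
    using assms(1-4) False unfolding trunk_def incomp_eq_def by blast
qed

lemma incomp_eq_comparable_imp_eq: "x \<le> y \<or> y \<le> x \<Longrightarrow> incomp_eq x y \<Longrightarrow> x = y"
  by (auto simp: incomp_eq_def incomp_def)

lemma comparable_if_not_incomp_eq: "\<not> incomp_eq x y \<Longrightarrow> x \<le> y \<or> y \<le> x"
  by (auto simp: incomp_eq_def incomp_def)

lemma trunk_less_incomp_eq_left:
  assumes "trunk P T" "a \<in> T" "b \<in> T" "a' \<in> T"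
    and "a < b" "\<not> incomp_eq a b" "incomp_eq a a'"
  shows "a' < b"
proof -
  have "\<not> incomp_eq a' b"
    using assms incomp_eq_trans[of P T a a' b] by blast
  then have "a' \<le> b \<or> b \<le> a'" "a' \<noteq> b"
    by (auto simp: incomp_eq_def incomp_def)
  moreover have "\<not> b < a'"
    using \<open>a < b\<close> \<open>incomp_eq a a'\<close> by (auto simp: incomp_eq_def incomp_def)
  ultimately show ?thesis by auto
qed

lemma trunk_less_incomp_eq_right:
  assumes "trunk P T" "a \<in> T" "b \<in> T" "b' \<in> T"
    and "a < b" "\<not> incomp_eq a b" "incomp_eq b b'"
  shows "a < b'"
proof -
  have "\<not> incomp_eq a b'"
    using assms incomp_eq_trans[of P T a b' b] incomp_eq_sym by blast
  then have "a \<le> b' \<or> b' \<le> a" "a \<noteq> b'"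
    by (auto simp: incomp_eq_def incomp_def)
  moreover have "\<not> b' < a"
    using \<open>a < b\<close> \<open>incomp_eq b b'\<close> by (auto simp: incomp_eq_def incomp_def)
  ultimately show ?thesis by auto
qed

lemma trunk_less_incomp_eq:
  assumes "trunk P T" "a \<in> T" "b \<in> T" "a' \<in> T" "b' \<in> T"
    and "a < b" "\<not> incomp_eq a b" "incomp_eq a a'" "incomp_eq b b'"
  shows "a' < b'"
proof -
  have "a' < b"
    using trunk_less_incomp_eq_left[of P T a b a'] assms by blast
  moreover have "\<not> incomp_eq a' b"
    using assms incomp_eq_trans[of P T a a' b] by blast
  ultimately show ?thesis
    using trunk_less_incomp_eq_right[of P T a' b b'] assms by blast
qed

lemma chain_insert_comparable:
  fixes y :: "'a::order"
  assumes "Complete_Partial_Order.chain (\<le>) C" "\<And>c. c \<in> C \<Longrightarrow> c \<le> y \<or> y \<le> c"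
  shows "Complete_Partial_Order.chain (\<le>) (insert y C)"
  using assms by (auto intro!: chainI dest: chainD)

lemma maximal_chain_in_meets_incomp_eq:
  assumes "maximal_chain_in T C" "y \<in> T"
  shows "\<exists>c\<in>C. incomp_eq c y"
proof (rule ccontr)
  assume none: "\<not> ?thesis"
  then have "Complete_Partial_Order.chain (\<le>) (insert y C)"
    using assms(1) comparable_if_not_incomp_eq
    by (intro chain_insert_comparable) (auto simp: maximal_chain_in_def)
  then have "y \<in> C"
    using assms unfolding maximal_chain_in_def by blast
  then show False
    using none incomp_eq_refl by blast
qed

lemma maximal_chain_in_incomp_eq_unique:
  assumes "trunk P T" "maximal_chain_in T C" "c \<in> C" "c' \<in> C" "y \<in> T"
    and "incomp_eq c y" "incomp_eq c' y"
  shows "c = c'"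
proof -
  have "C \<subseteq> T" "Complete_Partial_Order.chain (\<le>) C"
    using assms(2) by (auto simp: maximal_chain_in_def)
  then have "incomp_eq c c'"
    using assms incomp_eq_trans[of P T c y c'] incomp_eq_sym by blast
  then show ?thesis
    using chainD[of "(\<le>)" C c c'] \<open>Complete_Partial_Order.chain (\<le>) C\<close> assms(3,4)
      incomp_eq_comparable_imp_eq by blast
qed

lemma order_iso_if_strict_mono_onto:
  assumes "Complete_Partial_Order.chain (\<le>) C" "f ` C = C'"
    and "\<And>c d. c \<in> C \<Longrightarrow> d \<in> C \<Longrightarrow> c < d \<Longrightarrow> f c < f d"
  shows "order_iso C C'"
proof -
  have le_iff: "c \<le> d \<longleftrightarrow> f c \<le> f d" if "c \<in> C" "d \<in> C" for c d
    using that assms(3)[of c d] assms(3)[of d c] chainD[OF assms(1) that]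
    by (metis less_le_not_le order.order_iff_strict)
  then have "inj_on f C"
    by (intro inj_onI) (metis le_iff order.antisym order.refl)
  then show ?thesis
    unfolding order_iso_def bij_betw_def using assms(2) le_iff by blast
qed

theorem maximal_chains_in_trunk_order_iso:
  assumes tr: "trunk P T" and C: "maximal_chain_in T C" and C': "maximal_chain_in T C'"
  shows "order_iso C C'"
proof -
  have CT: "C \<subseteq> T" and C'T: "C' \<subseteq> T" and chain: "Complete_Partial_Order.chain (\<le>) C"
    using C C' by (auto simp: maximal_chain_in_def)
  define f where "f c = (SOME c'. c' \<in> C' \<and> incomp_eq c c')" for c
  have f: "f c \<in> C' \<and> incomp_eq c (f c)" if "c \<in> C" for c
    unfolding f_def using maximal_chain_in_meets_incomp_eq[OF C'] that CT incomp_eq_sym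
    by (metis (no_types, lifting) someI_ex subsetD)
  have onto: "f ` C = C'"
  proof (intro subset_antisym subsetI)
    fix c' assume "c' \<in> C'"
    then obtain c where c: "c \<in> C" "incomp_eq c c'"
      using maximal_chain_in_meets_incomp_eq[OF C] C'T by blast
    then have "f c = c'"
      using maximal_chain_in_incomp_eq_unique[OF tr C', of "f c" c' c] f[of c] \<open>c' \<in> C'\<close> CT
        incomp_eq_sym by blast
    then show "c' \<in> f ` C" using c by blast
  qed (use f in blast)
  have strict_mono: "f c < f d" if "c \<in> C" "d \<in> C" "c < d" for c d
  proof -
    have "\<not> incomp_eq c d"
      using that(3) incomp_eq_comparable_imp_eq[of c d] by (auto simp: less_le)
    then show ?thesis
      using trunk_less_incomp_eq[OF tr, of c d "f c" "f d"] that f CT C'T by blast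
  qed
  show ?thesis
    using order_iso_if_strict_mono_onto[OF chain onto strict_mono] .
qed

lemma maximal_chain_in_subset:
  assumes "maximal_chain_in P M" "M \<subseteq> T" "T \<subseteq> P"
  shows "maximal_chain_in T M"
  unfolding maximal_chain_in_def
proof (intro conjI allI impI)
  fix D assume "D \<subseteq> T \<and> Complete_Partial_Order.chain (\<le>) D \<and> M \<subseteq> D"
  then show "D = M"
    using assms(1,3) unfolding maximal_chain_in_def by (meson order_trans)
qed (use assms in \<open>auto simp: maximal_chain_in_def\<close>)

lemma maximal_chain_in_exchange:
  assumes tr: "trunk P T" and M: "maximal_chain_in T M" and x: "x \<in> T"
  shows "maximal_chain_in T (insert x {m \<in> M. \<not> incomp_eq m x})"
    (is "maximal_chain_in T ?C")
proof -
  have MT: "M \<subseteq> T" and chM: "Complete_Partial_Order.chain (\<le>) M"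
    using M by (auto simp: maximal_chain_in_def)
  have "Complete_Partial_Order.chain (\<le>) {m \<in> M. \<not> incomp_eq m x}"
    using chM by (rule chain_subset) blast
  then have chC: "Complete_Partial_Order.chain (\<le>) ?C"
    by (rule chain_insert_comparable) (blast dest: comparable_if_not_incomp_eq)
  have "D \<subseteq> ?C"
    if D: "D \<subseteq> T" "Complete_Partial_Order.chain (\<le>) D" "?C \<subseteq> D" for D
  proof
    fix d assume d: "d \<in> D"
    have xD: "x \<in> D" using D(3) by blast
    show "d \<in> ?C"
    proof (cases "incomp_eq d x")
      case True
      then have "d = x"
        using chainD[OF D(2) d xD] incomp_eq_comparable_imp_eq by blast
      then show ?thesis by blast
    next
      case False
      obtain m where m: "m \<in> M" "incomp_eq m d"
        using maximal_chain_in_meets_incomp_eq[OF M] d D(1) by blast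
      have "m \<in> T" "d \<in> T" using m(1) MT d D(1) by auto
      then have "\<not> incomp_eq m x"
        using False incomp_eq_trans[OF tr \<open>d \<in> T\<close> \<open>m \<in> T\<close> x] incomp_eq_sym[OF m(2)] by blast
      then have "m \<in> ?C" using m(1) by blast
      then have "m = d"
        using chainD[OF D(2) _ d] D(3) m(2) incomp_eq_comparable_imp_eq by blast
      then show ?thesis using \<open>m \<in> ?C\<close> by simp
    qed
  qed
  then show ?thesis
    unfolding maximal_chain_in_def using MT x chC by blast
qed

theorem theorem5p4:
  fixes P T :: "'a::order set"
  assumes "trunk P T"
  shows "(\<forall>C C'. maximal_chain_in T C \<and> maximal_chain_in T C' \<longrightarrow> order_iso C C')
     \<and> (full_trunk P T \<longrightarrow>
          (\<forall>x\<in>T. \<exists>C. C \<subseteq> T \<and> Complete_Partial_Order.chain (\<le>) C \<and> x \<in> C \<and>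
                    (\<exists>M. maximum_chain P M \<and> order_iso C M)))"
proof (intro conjI impI allI ballI)
  fix C C' assume "maximal_chain_in T C \<and> maximal_chain_in T C'"
  then show "order_iso C C'"
    using maximal_chains_in_trunk_order_iso[OF assms] by blast
next
  fix x assume "full_trunk P T" "x \<in> T"
  then obtain M where M: "maximum_chain P M" "M \<subseteq> T"
    by (auto simp: full_trunk_def)
  have MT: "maximal_chain_in T M"
    using M assms maximal_chain_in_subset
    unfolding maximum_chain_def trunk_def by blast
  define C where "C = insert x {m \<in> M. \<not> incomp_eq m x}"
  have C: "maximal_chain_in T C"
    unfolding C_def using maximal_chain_in_exchange[OF assms MT \<open>x \<in> T\<close>] .
  then have "order_iso C M"
    using maximal_chains_in_trunk_order_iso[OF assms _ MT] by blast
  then show "\<exists>C. C \<subseteq> T \<and> Complete_Partial_Order.chain (\<le>) C \<and> x \<in> C \<and>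
                    (\<exists>M. maximum_chain P M \<and> order_iso C M)"
    using C M(1) unfolding maximal_chain_in_def C_def by blast
qed

end
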